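(* Let $n$ be a positive integer and let $a=(a_1,\ldots,a_n)$, $b=(b_1,\ldots,b_n)$ be vectors of nonnegative integers with $0\le a_k\le b_k$ for all $k\in[n]$. Then for all $j\in[n]$, \[\mathsf{invol}_j(b)\le \mathsf{invol}_j(a)\,n^{\|b-a\|_1}\prod_{k=1}^n\exp\!\left(\frac{b_k^2}{2k}\right),\] where $\|b-a\|_1=\sum_{k=1}^n|b_k-a_k|$.
   Context: For a vector $a$ of nonnegative integers and $m\ge1$ (with $m$ at most the length of $a$), $\mathsf{invol}_m(a)=\left(\prod_{k=1}^m k^{a_k}\right)\prod_{k=1}^m\sum_{j=0}^{\lfloor a_k/2\rfloor}\frac{(a_k)_{2j}}{(2k)^j j!}$, where $(x)_r=x(x-1)\cdots(x-r+1)$. *)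

theory Defs
  imports Complex_Main
begin

definition falling_fact :: "real \<Rightarrow> nat \<Rightarrow> real" where
  "falling_fact x r = (\<Prod>i<r. x - real i)"

text \<open>Vectors a = (a_1,...,a_n) are represented as functions nat => nat,
  only the values at indices 1..m matter.\<close>
definition invol :: "nat \<Rightarrow> (nat \<Rightarrow> nat) \<Rightarrow> real" where
  "invol m a = (\<Prod>k=1..m. real k ^ a k) *
     (\<Prod>k=1..m. \<Sum>j=0..a k div 2.
        falling_fact (real (a k)) (2*j) / ((2 * real k) ^ j * fact j))"

end

theory Submission
  imports Defs
begin

text \<open>Write \<open>invol m a\<close> as the weight \<open>\<Prod>k. k ^ a\<^sub>k\<close> times the factors \<open>invol_factor k (a k)\<close>.
  Each factor lies between \<open>1\<close> and \<open>exp (a\<^sub>k\<^sup>2 / 2k)\<close>, because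
  \<open>(a\<^sub>k)\<^sub>2\<^sub>j \<le> a\<^sub>k\<^sup>2\<^sup>j\<close> turns it into a partial sum of the exponential series.
  Raising \<open>a\<close> to \<open>b\<close> multiplies the weight by \<open>\<Prod>k. k ^ (b\<^sub>k - a\<^sub>k) \<le> n ^ \<parallel>b - a\<parallel>\<^sub>1\<close>.\<close>

lemma exp_partial_sum_le:
  fixes x :: real
  assumes "0 \<le> x"
  shows "(\<Sum>j\<le>N. x ^ j / fact j) \<le> exp x"
proof -
  have series: "(\<lambda>j. x ^ j / fact j) sums exp x"
    using exp_converges[of x] by (simp add: divide_inverse mult.commute)
  have "(\<Sum>j\<le>N. x ^ j / fact j) \<le> (\<Sum>j. x ^ j / fact j)"
    using series assms by (intro sum_le_suminf) (auto simp: sums_iff)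
  also have "\<dots> = exp x"
    using series by (simp add: sums_iff)
  finally show ?thesis .
qed

lemma falling_fact_nonneg:
  assumes "real r \<le> x + 1"
  shows "0 \<le> falling_fact x r"
  unfolding falling_fact_def using assms by (intro prod_nonneg) auto

lemma falling_fact_le_power:
  assumes "0 \<le> x" and "real r \<le> x + 1"
  shows "falling_fact x r \<le> x ^ r"
proof -
  have "falling_fact x r \<le> (\<Prod>i<r. x)"
    unfolding falling_fact_def using assms by (intro prod_mono) auto
  then show ?thesis by simp
qed

definition invol_factor :: "nat \<Rightarrow> nat \<Rightarrow> real" where
  "invol_factor k m = (\<Sum>j=0..m div 2.
     falling_fact (real m) (2*j) / ((2 * real k) ^ j * fact j))"

lemma invol_eq_weight_mult_factors:
  "invol m a = (\<Prod>k=1..m. real k ^ a k) * (\<Prod>k=1..m. invol_factor k (a k))"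
  unfolding invol_def invol_factor_def ..

lemma invol_factor_ge_1: "1 \<le> invol_factor k m"
proof -
  let ?term = "\<lambda>j. falling_fact (real m) (2*j) / ((2 * real k) ^ j * fact j)"
  have "\<And>j. j \<in> {0..m div 2} \<Longrightarrow> 0 \<le> ?term j"
    by (intro divide_nonneg_nonneg falling_fact_nonneg) auto
  then have "sum ?term {0} \<le> invol_factor k m"
    unfolding invol_factor_def by (intro sum_mono2) auto
  then show ?thesis by (simp add: falling_fact_def)
qed

lemma invol_factor_le_exp: "invol_factor k m \<le> exp (real m ^ 2 / (2 * real k))"
proof -
  have "invol_factor k m \<le> (\<Sum>j\<le>m div 2. (real m ^ 2 / (2 * real k)) ^ j / fact j)"
    unfolding invol_factor_def atLeast0AtMost
  proof (rule sum_mono)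
    fix j assume "j \<in> {..m div 2}"
    then have "falling_fact (real m) (2*j) \<le> real m ^ (2*j)"
      by (intro falling_fact_le_power) auto
    then have "falling_fact (real m) (2*j) / ((2 * real k) ^ j * fact j)
        \<le> real m ^ (2*j) / ((2 * real k) ^ j * fact j)"
      by (intro divide_right_mono) auto
    also have "\<dots> = (real m ^ 2 / (2 * real k)) ^ j / fact j"
      by (simp add: power_divide power_mult)
    finally show "falling_fact (real m) (2*j) / ((2 * real k) ^ j * fact j)
        \<le> (real m ^ 2 / (2 * real k)) ^ j / fact j" .
  qed
  also have "\<dots> \<le> exp (real m ^ 2 / (2 * real k))"
    by (intro exp_partial_sum_le) simp
  finally show ?thesis .
qed

lemma weight_le_invol: "(\<Prod>k=1..m. real k ^ a k) \<le> invol m a"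
proof -
  have "1 \<le> (\<Prod>k=1..m. invol_factor k (a k))"
    by (intro prod_ge_1 invol_factor_ge_1)
  moreover have "0 \<le> (\<Prod>k=1..m. real k ^ a k)"
    by (intro prod_nonneg) auto
  ultimately show ?thesis
    unfolding invol_eq_weight_mult_factors by (simp add: mult_le_cancel_left1)
qed

lemma invol_le_weight_mult_exp:
  "invol m a \<le> (\<Prod>k=1..m. real k ^ a k) * (\<Prod>k=1..m. exp (real (a k) ^ 2 / (2 * real k)))"
  unfolding invol_eq_weight_mult_factors
  by (intro mult_left_mono prod_mono prod_nonneg)
     (auto intro: invol_factor_le_exp order_trans[OF zero_le_one invol_factor_ge_1])

lemma weight_le_weight_mult_power_l1_dist:
  assumes "j \<le> n" and "1 \<le> n" and "\<forall>k\<in>{1..n}. a k \<le> b k"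
  shows "(\<Prod>k=1..j. real k ^ b k)
    \<le> (\<Prod>k=1..j. real k ^ a k) * real n ^ (\<Sum>k=1..n. b k - a k)"
proof -
  have weight_a_nonneg: "0 \<le> (\<Prod>k=1..j. real k ^ a k)"
    by (intro prod_nonneg) auto
  have "(\<Prod>k=1..j. real k ^ b k) = (\<Prod>k=1..j. real k ^ a k * real k ^ (b k - a k))"
    using assms by (intro prod.cong) (auto simp: power_add[symmetric])
  also have "\<dots> = (\<Prod>k=1..j. real k ^ a k) * (\<Prod>k=1..j. real k ^ (b k - a k))"
    by (simp add: prod.distrib)
  also have "\<dots> \<le> (\<Prod>k=1..j. real k ^ a k) * (\<Prod>k=1..j. real n ^ (b k - a k))"
    using assms weight_a_nonneg by (intro mult_left_mono prod_mono) (auto intro: power_mono)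
  also have "(\<Prod>k=1..j. real n ^ (b k - a k)) = real n ^ (\<Sum>k=1..j. b k - a k)"
    by (simp add: power_sum)
  also have "\<dots> \<le> real n ^ (\<Sum>k=1..n. b k - a k)"
    using assms by (intro power_increasing sum_mono2) auto
  finally show ?thesis
    using weight_a_nonneg by (simp add: mult_left_mono)
qed

theorem lemma5p3:
  fixes n :: nat and a b :: "nat \<Rightarrow> nat"
  assumes "n \<ge> 1"
    and "\<forall>k\<in>{1..n}. a k \<le> b k"
  shows "\<forall>j\<in>{1..n}. invol j b \<le>
     invol j a * real n ^ (\<Sum>k=1..n. b k - a k) *
     (\<Prod>k=1..n. exp (real (b k) ^ 2 / (2 * real k)))"
proof
  fix j assume j: "j \<in> {1..n}"
  let ?E = "\<lambda>k. exp (real (b k) ^ 2 / (2 * real k))"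
  let ?N = "real n ^ (\<Sum>k=1..n. b k - a k)"
  have "invol j b \<le> (\<Prod>k=1..j. real k ^ b k) * (\<Prod>k=1..j. ?E k)"
    by (rule invol_le_weight_mult_exp)
  also have "\<dots> \<le> ((\<Prod>k=1..j. real k ^ a k) * ?N) * (\<Prod>k=1..n. ?E k)"
    using j assms
    by (intro mult_mono weight_le_weight_mult_power_l1_dist prod_mono2 prod_nonneg)
       (auto simp: mult_nonneg_nonneg prod_nonneg)
  also have "\<dots> \<le> invol j a * ?N * (\<Prod>k=1..n. ?E k)"
    by (intro mult_right_mono weight_le_invol prod_nonneg) auto
  finally show "invol j b \<le> invol j a * ?N * (\<Prod>k=1..n. ?E k)" .
qed

end
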